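(* Let $F_{\mathrm{mod}}$ be a toy model H\'enon-like diffeomorphism with $DF_{\mathrm{mod}}(w)=\begin{pmatrix}A_1(w)&\mathbf 0\\ C_1(w)&D_1(w)\end{pmatrix}$ and $DF^N_{\mathrm{mod}}(w)=\begin{pmatrix}A_N(w)&\mathbf 0\\ C_N(w)&D_N(w)\end{pmatrix}$. Suppose $\|D_1\|<m(A_1)$. Then there is $\kappa>0$, independent of $N$, such that $\|C_N A_N^{-1}\|<\kappa$ for all $N\ge1$.
   Context: A toy model H\'enon-like map is $F_{\mathrm{mod}}(x,y,z)=(f(x)-\varepsilon(x,y),\,x,\,\delta(x,y,z))$ on a box $B\subset\mathbb R^3$ ($f$ unimodal, $\varepsilon,\delta$ small analytic). In the block decomposition of $DF_{\mathrm{mod}}$ with respect to $\mathbb R^2\times\mathbb R$, $A_1(w)=DF_{2d}(x,y)$ is the $2\times2$ derivative of $F_{2d}(x,y)=(f(x)-\varepsilon(x,y),x)$, $\mathbf 0$ is the zero column, $C_1(w)=(\partial_x\delta(w)\ \partial_y\delta(w))$ and $D_1(w)=\partial_z\delta(w)$; $A_N,C_N,D_N$ are the corresponding blocks of $DF^N_{\mathrm{mod}}(w)$. For a linear map $L$, $m(L)=\|L^{-1}\|^{-1}$ is the minimum expansion rate; norms and $m(\cdot)$ of these matrix-valued functions are taken as sup (respectively inf) over points of the domain. *)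

theory Defs
  imports "HOL-Analysis.Analysis"
begin

text \<open>Points of the box are vectors w = (x,y,z) in real^3, with x = w$1, y = w$2, z = w$3.\<close>

definition Fmod :: "(real \<Rightarrow> real) \<Rightarrow> (real^2 \<Rightarrow> real) \<Rightarrow> (real^3 \<Rightarrow> real) \<Rightarrow> real^3 \<Rightarrow> real^3" where
  "Fmod f eps delta w = vector [f (w$1) - eps (vector [w$1, w$2]), w$1, delta w]"

definition DFN :: "(real^3 \<Rightarrow> real^3) \<Rightarrow> nat \<Rightarrow> real^3 \<Rightarrow> real^3^3" where
  "DFN F N w = matrix (frechet_derivative (F ^^ N) (at w))"

definition emb23 :: "2 \<Rightarrow> 3" where
  "emb23 i = (if i = 1 then 1 else 2)"

text \<open>Blocks with respect to R^2 x R: M = (A 0; C D).\<close>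
definition blockA :: "real^3^3 \<Rightarrow> real^2^2" where
  "blockA M = (\<chi> i j. M $ emb23 i $ emb23 j)"

definition blockC :: "real^3^3 \<Rightarrow> real^2" where
  "blockC M = (\<chi> j. M $ 3 $ emb23 j)"

definition blockD :: "real^3^3 \<Rightarrow> real" where
  "blockD M = M $ 3 $ 3"

definition norm_CAinv :: "real^2 \<Rightarrow> real^2^2 \<Rightarrow> real" where
  "norm_CAinv C A = onorm (\<lambda>v. C \<bullet> (matrix_inv A *v v))"

definition min_exp :: "real^2^2 \<Rightarrow> real" where
  "min_exp L = (if invertible L then inverse (onorm (\<lambda>v. matrix_inv L *v v)) else 0)"

definition unimodal_on :: "(real \<Rightarrow> real) \<Rightarrow> real \<Rightarrow> real \<Rightarrow> bool" where
  "unimodal_on f a b \<longleftrightarrow> (\<exists>c. a < c \<and> c < b \<and> strict_mono_on {a..c} f \<and> strict_antimono_on {c..b} f)"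

end

theory Submission
  imports Defs
begin

text \<open>
  The derivative of the N-th iterate is the product of the one-step derivatives along the orbit,
  all of them block lower triangular. With P = DF(F^N w) and Q = DF^N(w), the blocks of P Q give
  C_{N+1} A_{N+1}^{-1} = (C_P + D_P C_N A_N^{-1}) A_P^{-1}, so beta_N = ||C_N A_N^{-1}|| satisfies
  beta_{N+1} <= (K + s beta_N) / m with K = sup ||C_1||, s = sup |D_1| and m = inf m(A_1).
  Since s < m, the interval [0, K/(m - s)] is invariant under this recursion and contains
  beta_0 = 0. The suprema K and s are finite because the partial derivatives of delta are
  continuous on the compact box.
\<close>

lemma matrix_inv:
  fixes A :: "'a::semiring_1^'n^'n"
  assumes "invertible A"
  shows matrix_inv_right: "A ** matrix_inv A = mat 1"
    and matrix_inv_left: "matrix_inv A ** A = mat 1"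
proof -
  have "\<exists>A'. A ** A' = mat 1 \<and> A' ** A = mat 1"
    using assms by (simp add: invertible_def)
  then have "A ** matrix_inv A = mat 1 \<and> matrix_inv A ** A = mat 1"
    unfolding matrix_inv_def by (rule someI_ex)
  then show "A ** matrix_inv A = mat 1" "matrix_inv A ** A = mat 1"
    by auto
qed

lemma matrix_inv_mult:
  fixes A B :: "'a::comm_ring_1^'n^'n"
  assumes "invertible A" "invertible B"
  shows "matrix_inv (A ** B) = matrix_inv B ** matrix_inv A"
proof -
  let ?X = "matrix_inv (A ** B)"
  have "(A ** B) ** (matrix_inv B ** matrix_inv A) = A ** (B ** matrix_inv B) ** matrix_inv A"
    by (simp add: matrix_mul_assoc)
  also have "\<dots> = mat 1"
    using assms by (simp add: matrix_inv_right)
  finally have right: "(A ** B) ** (matrix_inv B ** matrix_inv A) = mat 1" .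
  have "?X = ?X ** ((A ** B) ** (matrix_inv B ** matrix_inv A))"
    by (simp add: right)
  also have "\<dots> = (?X ** (A ** B)) ** (matrix_inv B ** matrix_inv A)"
    by (simp only: matrix_mul_assoc)
  also have "\<dots> = matrix_inv B ** matrix_inv A"
    by (simp add: matrix_inv_left[OF invertible_mult[OF assms]])
  finally show ?thesis .
qed

lemma min_exp_nonneg: "0 \<le> min_exp L"
  by (simp add: min_exp_def onorm_pos_le)

lemma min_exp_lower_bound:
  assumes "0 < m" "m \<le> min_exp L"
  shows min_exp_invertible: "invertible L"
    and onorm_matrix_inv_le: "onorm (\<lambda>v. matrix_inv L *v v) \<le> inverse m"
proof -
  show inv: "invertible L"
    using assms by (auto simp: min_exp_def split: if_splits)
  then have "min_exp L = inverse (onorm (\<lambda>v. matrix_inv L *v v))"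
    by (simp add: min_exp_def)
  then show "onorm (\<lambda>v. matrix_inv L *v v) \<le> inverse m"
    using assms by (metis inverse_inverse_eq le_imp_inverse_le)
qed

definition block_lower_triangular :: "real^3^3 \<Rightarrow> bool" where
  "block_lower_triangular M \<longleftrightarrow> M$1$3 = 0 \<and> M$2$3 = 0"

lemma emb23_simps [simp]: "emb23 1 = 1" "emb23 2 = 2"
  by (simp_all add: emb23_def)

lemma block_lower_triangular_mat_1: "block_lower_triangular (mat 1)"
  by (simp add: block_lower_triangular_def mat_def)

lemma block_lower_triangular_mult:
  "block_lower_triangular P \<Longrightarrow> block_lower_triangular Q \<Longrightarrow> block_lower_triangular (P ** Q)"
  by (simp add: block_lower_triangular_def matrix_matrix_mult_def sum_3)

lemma blockA_mat_1: "blockA (mat 1) = mat 1"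
  by (simp add: blockA_def mat_def vec_eq_iff forall_2)

lemma blockC_mat_1: "blockC (mat 1) = 0"
  by (simp add: blockC_def mat_def vec_eq_iff forall_2)

lemma blockA_mult: "block_lower_triangular P \<Longrightarrow> blockA (P ** Q) = blockA P ** blockA Q"
  by (simp add: block_lower_triangular_def blockA_def matrix_matrix_mult_def sum_3 sum_2
      vec_eq_iff forall_2)

lemma blockC_mult: "blockC (P ** Q) = blockC P v* blockA Q + blockD P *\<^sub>R blockC Q"
  by (simp add: blockC_def blockA_def blockD_def matrix_matrix_mult_def vector_matrix_mult_def
      sum_3 sum_2 vec_eq_iff forall_2 algebra_simps)

lemma norm_CAinv_zero: "norm_CAinv 0 A = 0"
  by (simp add: norm_CAinv_def onorm_zero)

lemma bounded_linear_CAinv: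
  fixes C :: "real^'m" and A :: "real^'n^'m"
  shows "bounded_linear (\<lambda>v. C \<bullet> (A *v v))"
  by (rule bounded_linear_compose[OF bounded_linear_inner_right matrix_vector_mul_bounded_linear])

lemma norm_CAinv_nonneg: "0 \<le> norm_CAinv C A"
  by (simp add: norm_CAinv_def onorm_pos_le bounded_linear_CAinv)

lemma norm_CAinv_mult_le:
  assumes P: "block_lower_triangular P" "invertible (blockA P)"
    and Q: "invertible (blockA Q)"
  shows "norm_CAinv (blockC (P ** Q)) (blockA (P ** Q))
    \<le> (norm (blockC P) + \<bar>blockD P\<bar> * norm_CAinv (blockC Q) (blockA Q))
       * onorm (\<lambda>v. matrix_inv (blockA P) *v v)"
proof -
  let ?g = "\<lambda>v. blockC Q \<bullet> (matrix_inv (blockA Q) *v v)"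
  let ?h = "\<lambda>u. blockC P \<bullet> u + blockD P *\<^sub>R ?g u"
  have CQ_cancel: "(blockC P v* blockA Q) \<bullet> (matrix_inv (blockA Q) *v u) = blockC P \<bullet> u" for u
    using Q by (simp add: dot_lmul_matrix matrix_vector_mul_assoc matrix_inv_right)
  have decomp: "(\<lambda>v. blockC (P ** Q) \<bullet> (matrix_inv (blockA (P ** Q)) *v v))
      = ?h \<circ> (\<lambda>v. matrix_inv (blockA P) *v v)"
    using P Q by (simp add: fun_eq_iff blockA_mult blockC_mult matrix_inv_mult
        inner_add_left CQ_cancel flip: matrix_vector_mul_assoc)
  have scaled: "bounded_linear (\<lambda>u. blockD P *\<^sub>R ?g u)"
    by (rule bounded_linear_compose[OF bounded_linear_scaleR_right bounded_linear_CAinv])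
  have "norm_CAinv (blockC (P ** Q)) (blockA (P ** Q))
      \<le> onorm ?h * onorm (\<lambda>v. matrix_inv (blockA P) *v v)"
    unfolding norm_CAinv_def decomp
    by (rule onorm_compose[OF bounded_linear_add[OF bounded_linear_inner_right scaled]
          matrix_vector_mul_bounded_linear])
  moreover have "onorm ?h \<le> norm (blockC P) + \<bar>blockD P\<bar> * norm_CAinv (blockC Q) (blockA Q)"
  proof (rule onorm_triangle_le)
    show "onorm (\<lambda>u. blockC P \<bullet> u) + onorm (\<lambda>u. blockD P *\<^sub>R ?g u)
        \<le> norm (blockC P) + \<bar>blockD P\<bar> * norm_CAinv (blockC Q) (blockA Q)"
      using onorm_inner_right[OF bounded_linear_ident, of "blockC P"]
        onorm_scaleR[OF bounded_linear_CAinv, of "blockD P" "blockC Q" "matrix_inv (blockA Q)"]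
      by (simp add: onorm_id norm_CAinv_def)
  qed (fact bounded_linear_inner_right, fact scaled)
  ultimately show ?thesis
    by (meson mult_right_mono onorm_pos_le matrix_vector_mul_bounded_linear order_trans)
qed

lemma DFN_0: "DFN F 0 w = mat 1"
  using frechet_derivative_at[OF has_derivative_id, of w]
  by (simp add: DFN_def id_def[symmetric] matrix_id_mat_1)

lemma DFN_1: "(F has_derivative L) (at w) \<Longrightarrow> DFN F 1 w = matrix L"
  by (simp add: DFN_def frechet_derivative_at[symmetric])

lemma DFN_Suc:
  assumes "(F ^^ N) differentiable (at w)" "F differentiable (at ((F ^^ N) w))"
  shows "DFN F (Suc N) w = DFN F 1 ((F ^^ N) w) ** DFN F N w"
proof -
  have "frechet_derivative (F \<circ> F ^^ N) (at w)
      = frechet_derivative F (at ((F ^^ N) w)) \<circ> frechet_derivative (F ^^ N) (at w)"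
    by (rule frechet_derivative_compose[OF assms])
  moreover have "linear (frechet_derivative g (at x))" if "g differentiable (at x)"
    for g :: "real^3 \<Rightarrow> real^3" and x
    using that frechet_derivative_works has_derivative_linear by blast
  ultimately show ?thesis
    using assms by (simp add: DFN_def matrix_compose)
qed

lemma funpow_in_invariant: "F ` S \<subseteq> S \<Longrightarrow> w \<in> S \<Longrightarrow> (F ^^ N) w \<in> S"
  by (induction N) auto

lemma funpow_differentiable_at:
  assumes "F ` S \<subseteq> S" "\<And>p. p \<in> S \<Longrightarrow> F differentiable (at p)" "w \<in> S"
  shows "(F ^^ N) differentiable (at w)"
proof (induction N)
  case 0
  then show ?case by (simp add: differentiable_ident)
next
  case (Suc N)
  have "F differentiable (at ((F ^^ N) w))"
    using assms by (simp add: funpow_in_invariant)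
  from differentiable_chain_at[OF Suc this] show ?case
    by (simp add: o_def)
qed

lemma norm_CAinv_mult_le_invariant_bound:
  assumes P: "block_lower_triangular P" "norm (blockC P) \<le> K" "\<bar>blockD P\<bar> \<le> s"
      "m \<le> min_exp (blockA P)"
    and Q: "invertible (blockA Q)" "norm_CAinv (blockC Q) (blockA Q) \<le> K / (m - s)"
    and "0 \<le> K" "0 \<le> s" "s < m"
  shows "invertible (blockA (P ** Q))"
    and "norm_CAinv (blockC (P ** Q)) (blockA (P ** Q)) \<le> K / (m - s)"
proof -
  define B where "B = K / (m - s)"
  have "0 < m"
    using \<open>0 \<le> s\<close> \<open>s < m\<close> by linarith
  have "0 \<le> B"
    unfolding B_def using \<open>0 \<le> K\<close> \<open>s < m\<close> by simp
  have fixed_point: "K + s * B = m * B"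
    unfolding B_def using \<open>s < m\<close> by (simp add: field_simps)
  have inv_P: "invertible (blockA P)" "onorm (\<lambda>v. matrix_inv (blockA P) *v v) \<le> inverse m"
    using min_exp_lower_bound[OF \<open>0 < m\<close> P(4)] by simp_all
  show "invertible (blockA (P ** Q))"
    unfolding blockA_mult[OF P(1)] by (rule invertible_mult[OF inv_P(1) Q(1)])
  have "\<bar>blockD P\<bar> * norm_CAinv (blockC Q) (blockA Q) \<le> s * B"
    using P(3) Q(2) \<open>0 \<le> s\<close> by (intro mult_mono) (simp_all add: B_def norm_CAinv_nonneg)
  then have recursion_le: "norm (blockC P) + \<bar>blockD P\<bar> * norm_CAinv (blockC Q) (blockA Q)
      \<le> K + s * B"
    using P(2) by simp
  have "norm_CAinv (blockC (P ** Q)) (blockA (P ** Q))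
      \<le> (norm (blockC P) + \<bar>blockD P\<bar> * norm_CAinv (blockC Q) (blockA Q))
         * onorm (\<lambda>v. matrix_inv (blockA P) *v v)"
    by (rule norm_CAinv_mult_le[OF P(1) inv_P(1) Q(1)])
  also have "\<dots> \<le> (K + s * B) * inverse m"
    using \<open>0 \<le> K\<close> \<open>0 \<le> s\<close> \<open>0 \<le> B\<close>
    by (intro mult_mono[OF recursion_le inv_P(2)] onorm_pos_le matrix_vector_mul_bounded_linear) simp
  also have "\<dots> = B"
    using \<open>0 < m\<close> by (simp add: fixed_point)
  finally show "norm_CAinv (blockC (P ** Q)) (blockA (P ** Q)) \<le> K / (m - s)"
    by (simp add: B_def)
qed

lemma norm_CAinv_DFN_le:
  fixes F :: "real^3 \<Rightarrow> real^3"
  assumes invariant: "F ` S \<subseteq> S"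
    and differentiable: "\<And>p. p \<in> S \<Longrightarrow> F differentiable (at p)"
    and lower: "\<And>p. p \<in> S \<Longrightarrow> block_lower_triangular (DFN F 1 p)"
    and C_le: "\<And>p. p \<in> S \<Longrightarrow> norm (blockC (DFN F 1 p)) \<le> K"
    and D_le: "\<And>p. p \<in> S \<Longrightarrow> \<bar>blockD (DFN F 1 p)\<bar> \<le> s"
    and A_ge: "\<And>p. p \<in> S \<Longrightarrow> m \<le> min_exp (blockA (DFN F 1 p))"
    and "0 \<le> K" "0 \<le> s" "s < m" "w \<in> S"
  shows "block_lower_triangular (DFN F N w) \<and> invertible (blockA (DFN F N w))
    \<and> norm_CAinv (blockC (DFN F N w)) (blockA (DFN F N w)) \<le> K / (m - s)"
proof (induction N)
  case 0
  have "invertible (mat 1 :: real^2^2)"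
    unfolding invertible_def by (rule exI[of _ "mat 1"]) simp
  then show ?case
    using assms by (simp add: DFN_0 block_lower_triangular_mat_1 blockA_mat_1 blockC_mat_1
        norm_CAinv_zero)
next
  case (Suc N)
  have orbit: "(F ^^ N) w \<in> S"
    using invariant \<open>w \<in> S\<close> by (rule funpow_in_invariant)
  have "DFN F (Suc N) w = DFN F 1 ((F ^^ N) w) ** DFN F N w"
    by (rule DFN_Suc[OF funpow_differentiable_at[OF invariant differentiable \<open>w \<in> S\<close>]
          differentiable[OF orbit]])
  then show ?case
    using Suc.IH norm_CAinv_mult_le_invariant_bound[OF lower[OF orbit] C_le[OF orbit]
        D_le[OF orbit] A_ge[OF orbit] _ _ \<open>0 \<le> K\<close> \<open>0 \<le> s\<close> \<open>s < m\<close>]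
      block_lower_triangular_mult[OF lower[OF orbit]]
    by simp
qed

lemma Fmod_has_derivative:
  fixes w :: "real^3"
  assumes "(f has_real_derivative f' (w$1)) (at (w$1))"
    and "(eps has_derivative (\<lambda>h. eps_x (vector [w$1, w$2]) * h$1 + eps_y (vector [w$1, w$2]) * h$2))
      (at (vector [w$1, w$2]))"
    and "(delta has_derivative (\<lambda>h. delta_x w * h$1 + delta_y w * h$2 + delta_z w * h$3)) (at w)"
  shows "(Fmod f eps delta has_derivative (\<lambda>h. vector
      [f' (w$1) * h$1 - (eps_x (vector [w$1, w$2]) * h$1 + eps_y (vector [w$1, w$2]) * h$2), h$1,
       delta_x w * h$1 + delta_y w * h$2 + delta_z w * h$3])) (at w)"
proof -
  have vector3: "(vector [x, y, z] :: real^3) = x *\<^sub>R axis 1 1 + y *\<^sub>R axis 2 1 + z *\<^sub>R axis 3 1"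
    for x y z
    by (simp add: vec_eq_iff forall_3 axis_def)
  have "linear (\<lambda>w::real^3. vector [w$1, w$2] :: real^2)"
    by (auto simp: linear_iff vec_eq_iff forall_2)
  then have "((\<lambda>w::real^3. vector [w$1, w$2] :: real^2) has_derivative (\<lambda>h. vector [h$1, h$2]))
      (at w)"
    by (simp add: bounded_linear_imp_has_derivative linear_conv_bounded_linear)
  with assms(2) have "((\<lambda>w. eps (vector [w$1, w$2])) has_derivative
      (\<lambda>h. eps_x (vector [w$1, w$2]) * h$1 + eps_y (vector [w$1, w$2]) * h$2)) (at w)"
    by (auto dest: diff_chain_at simp: o_def)
  moreover have "((\<lambda>w. f (w$1)) has_derivative (\<lambda>h. f' (w$1) * h$1)) (at w)"
    using diff_chain_at[OF bounded_linear_imp_has_derivative[OF bounded_linear_vec_nth]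
        has_field_derivative_imp_has_derivative[OF assms(1)]]
    by (simp add: o_def)
  ultimately show ?thesis
    unfolding Fmod_def[abs_def] vector3
    by (intro derivative_intros assms(3)
        bounded_linear_imp_has_derivative[OF bounded_linear_vec_nth])
qed

lemma Fmod_differentiable_DFN_1:
  fixes w :: "real^3"
  assumes "(f has_real_derivative f' (w$1)) (at (w$1))"
    and "(eps has_derivative (\<lambda>h. eps_x (vector [w$1, w$2]) * h$1 + eps_y (vector [w$1, w$2]) * h$2))
      (at (vector [w$1, w$2]))"
    and "(delta has_derivative (\<lambda>h. delta_x w * h$1 + delta_y w * h$2 + delta_z w * h$3)) (at w)"
  shows "Fmod f eps delta differentiable (at w)"
    and "block_lower_triangular (DFN (Fmod f eps delta) 1 w)"
    and "blockC (DFN (Fmod f eps delta) 1 w) = vector [delta_x w, delta_y w]"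
    and "blockD (DFN (Fmod f eps delta) 1 w) = delta_z w"
  using Fmod_has_derivative[of f f' w eps eps_x eps_y delta delta_x delta_y delta_z, OF assms]
  by (auto simp: differentiable_def block_lower_triangular_def blockC_def blockD_def
      matrix_def axis_def vec_eq_iff forall_2 dest: DFN_1)

lemma norm_vector2_le: "norm (vector [x, y] :: real^2) \<le> \<bar>x\<bar> + \<bar>y\<bar>"
  using norm_le_l1_cart[of "vector [x, y] :: real^2"] by (simp add: sum_2)

lemma continuous_on_compact_bound_vector2:
  fixes g h :: "'a::topological_space \<Rightarrow> real"
  assumes "compact S" "continuous_on S g" "continuous_on S h"
  obtains K where "0 \<le> K" "\<And>x. x \<in> S \<Longrightarrow> norm (vector [g x, h x] :: real^2) \<le> K"
proof -
  obtain Kg Kh where "0 \<le> Kg" "\<And>x. x \<in> S \<Longrightarrow> \<bar>g x\<bar> \<le> Kg"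
    and "0 \<le> Kh" "\<And>x. x \<in> S \<Longrightarrow> \<bar>h x\<bar> \<le> Kh"
    using continuous_on_compact_bound[OF assms(1,2)] continuous_on_compact_bound[OF assms(1,3)]
    by (metis real_norm_def)
  then show thesis
    using that[of "Kg + Kh"] norm_vector2_le by (smt (verit))
qed

lemma abs_le_SUP_abs:
  fixes g :: "'a::topological_space \<Rightarrow> real"
  assumes "compact S" "continuous_on S g" "x \<in> S"
  shows "\<bar>g x\<bar> \<le> (SUP y\<in>S. \<bar>g y\<bar>)"
proof (rule cSUP_upper[OF \<open>x \<in> S\<close>])
  obtain K where "\<And>y. y \<in> S \<Longrightarrow> norm (g y) \<le> K"
    using continuous_on_compact_bound[OF assms(1,2)] by blast
  then show "bdd_above ((\<lambda>y. \<bar>g y\<bar>) ` S)"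
    by (auto intro!: bdd_aboveI2[where M = K])
qed

theorem lemma7p2:
  fixes f f' :: "real \<Rightarrow> real"
    and eps eps_x eps_y :: "real^2 \<Rightarrow> real"
    and delta delta_x delta_y delta_z :: "real^3 \<Rightarrow> real"
    and a b :: "real^3"
    and I :: "real set" and V :: "(real^2) set" and U :: "(real^3) set"
  assumes box: "\<forall>i. a $ i < b $ i"
    and U: "open U" "cbox a b \<subseteq> U"
    and V: "open V" "\<forall>w\<in>U. vector [w$1, w$2] \<in> V"
    and I: "open I" "\<forall>w\<in>U. w$1 \<in> I"
    and f_C1: "\<forall>x\<in>I. (f has_real_derivative f' x) (at x)" "continuous_on I f'"
    and f_unimodal: "unimodal_on f (a$1) (b$1)"
    and eps_C1: "\<forall>p\<in>V. (eps has_derivative (\<lambda>h. eps_x p * h$1 + eps_y p * h$2)) (at p)"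
      "continuous_on V eps_x" "continuous_on V eps_y"
    and delta_C1: "\<forall>w\<in>U. (delta has_derivative
         (\<lambda>h. delta_x w * h$1 + delta_y w * h$2 + delta_z w * h$3)) (at w)"
      "continuous_on U delta_x" "continuous_on U delta_y" "continuous_on U delta_z"
    and invariant: "Fmod f eps delta ` cbox a b \<subseteq> cbox a b"
    and hyp: "(SUP w\<in>cbox a b. \<bar>blockD (DFN (Fmod f eps delta) 1 w)\<bar>)
              < (INF w\<in>cbox a b. min_exp (blockA (DFN (Fmod f eps delta) 1 w)))"
  shows "\<exists>\<kappa>>0. \<forall>N\<ge>1. \<forall>w\<in>cbox a b.
           norm_CAinv (blockC (DFN (Fmod f eps delta) N w)) (blockA (DFN (Fmod f eps delta) N w)) < \<kappa>"
proof -
  let ?F = "Fmod f eps delta" and ?box = "cbox a b"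
  have derivatives: "?F differentiable (at w)" "block_lower_triangular (DFN ?F 1 w)"
    "blockC (DFN ?F 1 w) = vector [delta_x w, delta_y w]" "blockD (DFN ?F 1 w) = delta_z w"
    if "w \<in> ?box" for w
    using Fmod_differentiable_DFN_1[of f f' w eps eps_x eps_y delta delta_x delta_y delta_z]
      that U(2) f_C1(1) I(2) eps_C1(1) V(2) delta_C1(1) by auto
  have continuous: "continuous_on ?box delta_x" "continuous_on ?box delta_y" "continuous_on ?box delta_z"
    using delta_C1(2-4) U(2) by (auto intro: continuous_on_subset)
  obtain K where "0 \<le> K" and C_le: "\<And>w. w \<in> ?box \<Longrightarrow> norm (blockC (DFN ?F 1 w)) \<le> K"
    using continuous_on_compact_bound_vector2[OF compact_cbox continuous(1,2)] derivatives(3)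
    by metis
  define s where "s = (SUP w\<in>?box. \<bar>blockD (DFN ?F 1 w)\<bar>)"
  define m where "m = (INF w\<in>?box. min_exp (blockA (DFN ?F 1 w)))"
  have "s = (SUP w\<in>?box. \<bar>delta_z w\<bar>)"
    unfolding s_def by (rule SUP_cong) (use derivatives(4) in auto)
  then have D_le: "\<bar>blockD (DFN ?F 1 w)\<bar> \<le> s" if "w \<in> ?box" for w
    using abs_le_SUP_abs[OF compact_cbox continuous(3) that] derivatives(4)[OF that] by simp
  have A_ge: "m \<le> min_exp (blockA (DFN ?F 1 w))" if "w \<in> ?box" for w
    unfolding m_def by (rule cINF_lower[OF _ that]) (auto intro: bdd_belowI2 min_exp_nonneg)
  have "a \<in> ?box"
    using box by (simp add: mem_box_cart less_imp_le)
  then have "0 \<le> s"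
    using D_le by force
  have "s < m"
    using hyp unfolding s_def m_def .
  have bound: "norm_CAinv (blockC (DFN ?F N w)) (blockA (DFN ?F N w)) \<le> K / (m - s)"
    if "w \<in> ?box" for N w
    using norm_CAinv_DFN_le[OF invariant derivatives(1,2) C_le D_le A_ge
        \<open>0 \<le> K\<close> \<open>0 \<le> s\<close> \<open>s < m\<close> that]
    by blast
  have "0 < K / (m - s) + 1"
    by (intro add_nonneg_pos divide_nonneg_pos) (use \<open>0 \<le> K\<close> \<open>s < m\<close> in auto)
  with bound show ?thesis
    by (meson less_add_one order_le_less_trans)
qed

end
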